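(* Let $a\in\mathbb{R}$, $\gamma\in[0,1]$, $f:\mathbb{N}_a\to\mathbb{R}$, and $\alpha_1,\alpha_2,\beta_1,\beta_2>0$. Then for all $t\in\mathbb{N}_a$, $$\Bigl({}_\gamma\diamondsuit_a^{-\alpha_1,-\beta_1}\bigl({}_\gamma\diamondsuit_a^{-\alpha_2,-\beta_2}f\bigr)\Bigr)(t)=\gamma\bigl({}_\gamma\diamondsuit_a^{-(\alpha_1+\alpha_2),-(\beta_1+\alpha_2)}f\bigr)(t)+(1-\gamma)\bigl({}_\gamma\diamondsuit_a^{-(\alpha_1+\beta_2),-(\beta_1+\beta_2)}f\bigr)(t).$$
   Context: $\mathbb{N}_a=\{a,a+1,a+2,\dots\}$, $\sigma(s)=s+1$, $\rho(s)=s-1$. Falling factorial $x^{(y)}:=\Gamma(x+1)/\Gamma(x+1-y)$; rising factorial $x^{\overline{y}}:=\Gamma(x+y)/\Gamma(x)$. For $g:\mathbb{N}_a\to\mathbb{R}$ and $\alpha>0$: $(\Delta_a^{-\alpha}g)(t+\alpha)=\frac{1}{\Gamma(\alpha)}\sum_{s=a}^{t}(t+\alpha-\sigma(s))^{(\alpha-1)}g(s)$ and $(\nabla_a^{-\beta}g)(t)=\frac{1}{\Gamma(\beta)}\sum_{s=a}^{t}(t-\rho(s))^{\overline{\beta-1}}g(s)$, $t\in\mathbb{N}_a$. The diamond-$\gamma$ fractional operator of order $(\alpha,\beta)$ is $({}_\gamma\diamondsuit_a^{-\alpha,-\beta}g)(t)=\gamma(\Delta_a^{-\alpha}g)(t+\alpha)+(1-\gamma)(\nabla_a^{-\beta}g)(t)$,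 a function on $\mathbb{N}_a$. *)

theory Defs
  imports "HOL-Analysis.Analysis"
begin

definition falling_fact :: "real \<Rightarrow> real \<Rightarrow> real" where
  "falling_fact x y = Gamma (x + 1) / Gamma (x + 1 - y)"

definition rising_fact :: "real \<Rightarrow> real \<Rightarrow> real" where
  "rising_fact x y = Gamma (x + y) / Gamma x"

text \<open>Functions on N_a are represented as real functions; only values at a + k (k natural) matter.
  The sum over s in N_a with s \<le> t is the sum over s = a + k, k natural, a + k \<le> t.\<close>

text \<open>delta_frac_sum a alpha g t denotes (Delta_a^{-alpha} g)(t + alpha).\<close>
definition delta_frac_sum :: "real \<Rightarrow> real \<Rightarrow> (real \<Rightarrow> real) \<Rightarrow> real \<Rightarrow> real" where
  "delta_frac_sum a \<alpha> g t =
     (1 / Gamma \<alpha>) * (\<Sum>k\<in>{k::nat. a + real k \<le> t}.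
        falling_fact (t + \<alpha> - ((a + real k) + 1)) (\<alpha> - 1) * g (a + real k))"

text \<open>nabla_frac_sum a beta g t denotes (nabla_a^{-beta} g)(t).\<close>
definition nabla_frac_sum :: "real \<Rightarrow> real \<Rightarrow> (real \<Rightarrow> real) \<Rightarrow> real \<Rightarrow> real" where
  "nabla_frac_sum a \<beta> g t =
     (1 / Gamma \<beta>) * (\<Sum>k\<in>{k::nat. a + real k \<le> t}.
        rising_fact (t - ((a + real k) - 1)) (\<beta> - 1) * g (a + real k))"

definition diamond_frac :: "real \<Rightarrow> real \<Rightarrow> real \<Rightarrow> real \<Rightarrow> (real \<Rightarrow> real) \<Rightarrow> real \<Rightarrow> real" where
  "diamond_frac a \<gamma> \<alpha> \<beta> g t =
     \<gamma> * delta_frac_sum a \<alpha> g t + (1 - \<gamma>) * nabla_frac_sum a \<beta> g t"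

end

theory Submission
  imports Defs "HOL-Computational_Algebra.Formal_Power_Series"
begin

(* On the grid N_a = {a, a+1, ...} both fractional sums are discrete
   convolutions with one and the same kernel: for an order alpha > 0,
     (Delta_a^{-alpha} g)(a+n+alpha) = (nabla_a^{-alpha} g)(a+n)
       = sum_{k<=n} w_alpha(n-k) g(a+k),   w_alpha(m) = alpha^{(m) rising} / m!,
   because both Gamma quotients reduce to Gamma(m+alpha) / (Gamma alpha * m!).
   Discrete convolution is multiplication of formal power series, so, writing
   K_alpha for the series with coefficients w_alpha and G for the series of the
   grid values of g, the diamond operator multiplies G by
     D(alpha,beta) = gamma K_alpha + (1 - gamma) K_beta.
   The Vandermonde identity for Pochhammer symbols gives the semigroup law
   K_alpha * K_beta = K_(alpha+beta).  Hence the product of two diamond kernels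
   expands into the mixture of diamond kernels on the right-hand side, and the
   theorem follows from associativity of series multiplication. *)

definition frac_kernel :: "real \<Rightarrow> real fps" where
  "frac_kernel \<alpha> = Abs_fps (\<lambda>m. pochhammer \<alpha> m / fact m)"

(* Both Gamma quotients appearing in the definitions reduce to this one. *)
lemma frac_kernel_Gamma:
  assumes "\<alpha> > 0"
  shows "Gamma (real m + \<alpha>) / (Gamma \<alpha> * Gamma (real m + 1)) = fps_nth (frac_kernel \<alpha>) m"
proof -
  have "\<alpha> \<notin> \<int>\<^sub>\<le>\<^sub>0"
    using assms nonpos_Ints_nonpos by force
  then have "Gamma (\<alpha> + real m) = pochhammer \<alpha> m * Gamma \<alpha>"
    using pochhammer_Gamma[of \<alpha> m] Gamma_nonzero[of \<alpha>] by (simp add: field_simps)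
  moreover have "Gamma (real m + 1) = fact m"
    using Gamma_fact[of m] by (simp add: add.commute)
  moreover have "Gamma \<alpha> > 0"
    using assms by (simp add: Gamma_real_pos)
  ultimately show ?thesis
    unfolding frac_kernel_def by (simp add: add.commute field_simps)
qed

(* Semigroup law of the kernels: the Vandermonde identity for Pochhammer symbols. *)
lemma frac_kernel_mult: "frac_kernel \<alpha> * frac_kernel \<beta> = frac_kernel (\<alpha> + \<beta>)"
proof (rule fps_ext)
  fix m
  have "fps_nth (frac_kernel (\<alpha> + \<beta>)) m
      = (\<Sum>k\<le>m. of_nat (m choose k) * pochhammer \<alpha> k * pochhammer \<beta> (m - k)) / fact m"
    unfolding frac_kernel_def using pochhammer_binomial_sum[of \<alpha> \<beta> m] by simp
  also have "\<dots> = (\<Sum>k\<le>m. fps_nth (frac_kernel \<alpha>) k * fps_nth (frac_kernel \<beta>) (m - k))"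
    unfolding sum_divide_distrib
  proof (rule sum.cong[OF refl])
    fix k assume "k \<in> {..m}"
    then have "k \<le> m" by simp
    then show "of_nat (m choose k) * pochhammer \<alpha> k * pochhammer \<beta> (m - k) / fact m
        = fps_nth (frac_kernel \<alpha>) k * fps_nth (frac_kernel \<beta>) (m - k)"
      unfolding frac_kernel_def binomial_fact[OF \<open>k \<le> m\<close>] by (simp add: field_simps)
  qed
  finally show "fps_nth (frac_kernel \<alpha> * frac_kernel \<beta>) m = fps_nth (frac_kernel (\<alpha> + \<beta>)) m"
    by (simp add: fps_mult_nth atLeast0AtMost)
qed

definition grid_series :: "real \<Rightarrow> (real \<Rightarrow> real) \<Rightarrow> real fps" where
  "grid_series a g = Abs_fps (\<lambda>k. g (a + real k))"

(* A coefficient of a product, written as a convolution sum in the order used by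
   the fractional sums (kernel index n - k, function index k). *)
lemma fps_mult_nth_convolution:
  fixes F G :: "'a::comm_semiring_1 fps"
  shows "fps_nth (F * G) n = (\<Sum>k\<le>n. fps_nth F (n - k) * fps_nth G k)"
  by (simp add: mult.commute[of F] fps_mult_nth atLeast0AtMost mult.commute[of "fps_nth G _"])

lemma grid_points_upto: "{k::nat. a + real k \<le> a + real n} = {..n}"
  by auto

lemma delta_frac_sum_grid:
  assumes "\<alpha> > 0"
  shows "delta_frac_sum a \<alpha> g (a + real n) = fps_nth (frac_kernel \<alpha> * grid_series a g) n"
  unfolding delta_frac_sum_def grid_points_upto sum_distrib_left fps_mult_nth_convolution
proof (rule sum.cong[OF refl])
  fix k assume "k \<in> {..n}"
  then have "k \<le> n" by simp
  then have shift: "a + real n + \<alpha> - (a + real k + 1) + 1 = real (n - k) + \<alpha>"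
    and shift': "a + real n + \<alpha> - (a + real k + 1) + 1 - (\<alpha> - 1) = real (n - k) + 1"
    by (simp_all add: of_nat_diff)
  show "1 / Gamma \<alpha> * (falling_fact (a + real n + \<alpha> - (a + real k + 1)) (\<alpha> - 1) * g (a + real k))
      = fps_nth (frac_kernel \<alpha>) (n - k) * fps_nth (grid_series a g) k"
    unfolding falling_fact_def shift shift' grid_series_def frac_kernel_Gamma[OF assms, symmetric] by simp
qed

lemma nabla_frac_sum_grid:
  assumes "\<beta> > 0"
  shows "nabla_frac_sum a \<beta> g (a + real n) = fps_nth (frac_kernel \<beta> * grid_series a g) n"
  unfolding nabla_frac_sum_def grid_points_upto sum_distrib_left fps_mult_nth_convolution
proof (rule sum.cong[OF refl])
  fix k assume "k \<in> {..n}"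
  then have "k \<le> n" by simp
  then have shift: "a + real n - (a + real k - 1) + (\<beta> - 1) = real (n - k) + \<beta>"
    and shift': "a + real n - (a + real k - 1) = real (n - k) + 1"
    by (simp_all add: of_nat_diff)
  show "1 / Gamma \<beta> * (rising_fact (a + real n - (a + real k - 1)) (\<beta> - 1) * g (a + real k))
      = fps_nth (frac_kernel \<beta>) (n - k) * fps_nth (grid_series a g) k"
    unfolding rising_fact_def shift shift' grid_series_def frac_kernel_Gamma[OF assms, symmetric] by simp
qed

definition diamond_kernel :: "real \<Rightarrow> real \<Rightarrow> real \<Rightarrow> real fps" where
  "diamond_kernel \<gamma> \<alpha> \<beta> = fps_const \<gamma> * frac_kernel \<alpha> + fps_const (1 - \<gamma>) * frac_kernel \<beta>"

lemma diamond_frac_grid: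
  assumes "\<alpha> > 0" "\<beta> > 0"
  shows "diamond_frac a \<gamma> \<alpha> \<beta> g (a + real n) = fps_nth (diamond_kernel \<gamma> \<alpha> \<beta> * grid_series a g) n"
  unfolding diamond_frac_def diamond_kernel_def
    delta_frac_sum_grid[OF assms(1)] nabla_frac_sum_grid[OF assms(2)]
  by (simp add: distrib_right mult.assoc)

lemma grid_series_diamond_frac:
  assumes "\<alpha> > 0" "\<beta> > 0"
  shows "grid_series a (diamond_frac a \<gamma> \<alpha> \<beta> g) = diamond_kernel \<gamma> \<alpha> \<beta> * grid_series a g"
proof (rule fps_ext)
  fix n
  show "fps_nth (grid_series a (diamond_frac a \<gamma> \<alpha> \<beta> g)) n
      = fps_nth (diamond_kernel \<gamma> \<alpha> \<beta> * grid_series a g) n"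
    unfolding diamond_frac_grid[OF assms, symmetric] by (simp add: grid_series_def)
qed

lemma diamond_kernel_mult:
  "diamond_kernel \<gamma> \<alpha>1 \<beta>1 * diamond_kernel \<gamma> \<alpha>2 \<beta>2
     = fps_const \<gamma> * diamond_kernel \<gamma> (\<alpha>1 + \<alpha>2) (\<beta>1 + \<alpha>2)
       + fps_const (1 - \<gamma>) * diamond_kernel \<gamma> (\<alpha>1 + \<beta>2) (\<beta>1 + \<beta>2)"
  unfolding diamond_kernel_def frac_kernel_mult[symmetric] by (simp add: algebra_simps)

theorem mainTheorem14:
  fixes a \<gamma> \<alpha>1 \<alpha>2 \<beta>1 \<beta>2 :: real and f :: "real \<Rightarrow> real"
  assumes "0 \<le> \<gamma>" "\<gamma> \<le> 1"
    and "\<alpha>1 > 0" "\<alpha>2 > 0" "\<beta>1 > 0" "\<beta>2 > 0"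
  shows "\<forall>n::nat. diamond_frac a \<gamma> \<alpha>1 \<beta>1 (diamond_frac a \<gamma> \<alpha>2 \<beta>2 f) (a + real n) =
           \<gamma> * diamond_frac a \<gamma> (\<alpha>1 + \<alpha>2) (\<beta>1 + \<alpha>2) f (a + real n)
           + (1 - \<gamma>) * diamond_frac a \<gamma> (\<alpha>1 + \<beta>2) (\<beta>1 + \<beta>2) f (a + real n)"
proof
  fix n :: nat
  let ?F = "grid_series a f"
  have "diamond_frac a \<gamma> \<alpha>1 \<beta>1 (diamond_frac a \<gamma> \<alpha>2 \<beta>2 f) (a + real n)
      = fps_nth (diamond_kernel \<gamma> \<alpha>1 \<beta>1 * (diamond_kernel \<gamma> \<alpha>2 \<beta>2 * ?F)) n"
    using assms by (simp add: diamond_frac_grid grid_series_diamond_frac)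
  also have "\<dots> = fps_nth ((diamond_kernel \<gamma> \<alpha>1 \<beta>1 * diamond_kernel \<gamma> \<alpha>2 \<beta>2) * ?F) n"
    by (simp only: mult.assoc)
  also have "\<dots> = \<gamma> * fps_nth (diamond_kernel \<gamma> (\<alpha>1 + \<alpha>2) (\<beta>1 + \<alpha>2) * ?F) n
      + (1 - \<gamma>) * fps_nth (diamond_kernel \<gamma> (\<alpha>1 + \<beta>2) (\<beta>1 + \<beta>2) * ?F) n"
    unfolding diamond_kernel_mult by (simp add: distrib_right mult.assoc)
  also have "\<dots> = \<gamma> * diamond_frac a \<gamma> (\<alpha>1 + \<alpha>2) (\<beta>1 + \<alpha>2) f (a + real n)
      + (1 - \<gamma>) * diamond_frac a \<gamma> (\<alpha>1 + \<beta>2) (\<beta>1 + \<beta>2) f (a + real n)"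
    using assms by (simp add: diamond_frac_grid)
  finally show "diamond_frac a \<gamma> \<alpha>1 \<beta>1 (diamond_frac a \<gamma> \<alpha>2 \<beta>2 f) (a + real n) =
      \<gamma> * diamond_frac a \<gamma> (\<alpha>1 + \<alpha>2) (\<beta>1 + \<alpha>2) f (a + real n)
      + (1 - \<gamma>) * diamond_frac a \<gamma> (\<alpha>1 + \<beta>2) (\<beta>1 + \<beta>2) f (a + real n)" .
qed

end
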